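(* Let $q$ be a prime power, let $\mathcal{F}=(\mathcal{F}_1,\ldots,\mathcal{F}_r)$ be a flag on $\mathbb{F}_{q^n}$ and let $\beta\in\mathbb{F}_{q^n}^*$. Assume the subfield $\mathbb{F}_{q^m}$ is the best friend of $\mathcal{F}$. Then $$|\mathrm{Orb}_\beta(\mathcal{F})|=\frac{|\beta|}{|\langle\beta\rangle\cap\mathbb{F}_{q^m}^*|}.$$ In particular, if $\beta$ is a primitive element of $\mathbb{F}_{q^n}$, then $|\mathrm{Orb}(\mathcal{F})|=\frac{q^n-1}{q^m-1}$.
   Context: A flag on $\mathbb{F}_{q^n}$ is a sequence $(\mathcal{F}_1,\ldots,\mathcal{F}_r)$ of $\mathbb{F}_q$-subspaces with $\{0\}\subsetneq\mathcal{F}_1\subsetneq\cdots\subsetneq\mathcal{F}_r\subsetneq\mathbb{F}_{q^n}$. For $\gamma\in\mathbb{F}_{q^n}^*$, $\mathcal{F}\gamma=(\mathcal{F}_1\gamma,\ldots,\mathcal{F}_r\gamma)$ with $\mathcal{U}\gamma=\{u\gamma:u\in\mathcal{U}\}$. For $\beta\in\mathbb{F}_{q^n}^*$ of multiplicative order $|\beta|$, $\mathrm{Orb}_\beta(\mathcal{F})=\{\mathcal{F}\beta^j:0\le j\le|\beta|-1\}$; $\mathrm{Orb}(\mathcal{F})=\{\mathcal{F}\gamma:\gamma\in\mathbb{F}_{q^n}^*\}$. A subfield $\mathbb{F}_{q^m}$ is a friend of $\mathcal{F}$ if every $\mathcal{F}_i$ is an $\mathbb{F}_{q^m}$-vector space;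 the best friend is the largest friend. *)

theory Defs
  imports Complex_Main "HOL-Computational_Algebra.Primes"
begin

text \<open>Ambient field: a finite field type 'a with card UNIV = q^n.
  The subfield of order k (for k = q^m, m dividing n) is {x. x^k = x}.\<close>

definition subfield_of_order :: "nat \<Rightarrow> 'a::{field,finite} set" where
  "subfield_of_order k = {x. x ^ k = x}"

definition is_subspace_over :: "nat \<Rightarrow> 'a::{field,finite} set \<Rightarrow> bool" where
  "is_subspace_over k U \<longleftrightarrow> 0 \<in> U \<and> (\<forall>x\<in>U. \<forall>y\<in>U. x + y \<in> U)
     \<and> (\<forall>c\<in>subfield_of_order k. \<forall>x\<in>U. c * x \<in> U)"

definition is_flag :: "nat \<Rightarrow> 'a::{field,finite} set list \<Rightarrow> bool" where
  "is_flag q F \<longleftrightarrow> (\<forall>U\<in>set F. is_subspace_over q U)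
     \<and> (F \<noteq> [] \<longrightarrow> {0} \<subset> hd F \<and> last F \<subset> UNIV)
     \<and> (\<forall>i. Suc i < length F \<longrightarrow> F ! i \<subset> F ! Suc i)"

definition flag_mult :: "'a::{field,finite} set list \<Rightarrow> 'a \<Rightarrow> 'a set list" where
  "flag_mult F \<gamma> = map (\<lambda>U. (\<lambda>u. u * \<gamma>) ` U) F"

definition mult_order :: "'a::{field,finite} \<Rightarrow> nat" where
  "mult_order \<beta> = (LEAST k. 0 < k \<and> \<beta> ^ k = 1)"

definition orbit_beta :: "'a::{field,finite} \<Rightarrow> 'a set list \<Rightarrow> 'a set list set" where
  "orbit_beta \<beta> F = {flag_mult F (\<beta> ^ j) | j. j < mult_order \<beta>}"

definition orbit_full :: "'a::{field,finite} set list \<Rightarrow> 'a set list set" where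
  "orbit_full F = {flag_mult F \<gamma> | \<gamma>. \<gamma> \<noteq> 0}"

definition is_friend :: "nat \<Rightarrow> nat \<Rightarrow> 'a::{field,finite} set list \<Rightarrow> nat \<Rightarrow> bool" where
  "is_friend q n F m \<longleftrightarrow> 0 < m \<and> m dvd n \<and> (\<forall>U\<in>set F. is_subspace_over (q ^ m) U)"

definition is_best_friend :: "nat \<Rightarrow> nat \<Rightarrow> 'a::{field,finite} set list \<Rightarrow> nat \<Rightarrow> bool" where
  "is_best_friend q n F m \<longleftrightarrow> is_friend q n F m \<and> (\<forall>m'. is_friend q n F m' \<longrightarrow> m' \<le> m)"

definition cyclic_subgroup :: "'a::{field,finite} \<Rightarrow> 'a set" where
  "cyclic_subgroup \<beta> = {\<beta> ^ j | j. True}"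

end

theory Submission
  imports Defs "HOL-Computational_Algebra.Polynomial" "HOL-Number_Theory.Residues"
begin

(*
  For nonzero \<gamma> we have F\<gamma> = F iff \<gamma> lies in K = {c. c U \<subseteq> U for every U in F}.
  K is a subfield of F_{q^n} containing the best friend F_{q^m}, so every U in F is a K-vector
  space; counting dimensions, K = F_{q^j} with j dividing n, i.e. K is itself a friend, and
  maximality gives K = F_{q^m}. Consequently F\<beta>^i = F\<beta>^j iff \<beta>^(i-j) lies in F_{q^m}, iff
  i = j modulo the order t of \<beta>^(q^m - 1). The orbit therefore has t elements, while
  <\<beta>> \<inter> F_{q^m}^* = <\<beta>^t> has |\<beta>|/t elements.
*)

section \<open>Subfields of a finite field\<close>

definition is_subfield :: "'a::field set \<Rightarrow> bool" where
  "is_subfield K \<longleftrightarrow> 0 \<in> K \<and> 1 \<in> K \<and> (\<forall>a\<in>K. \<forall>b\<in>K. a + b \<in> K \<and> a * b \<in> K)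
     \<and> (\<forall>a\<in>K. - a \<in> K \<and> inverse a \<in> K)"

lemma is_subfield_UNIV: "is_subfield UNIV"
  by (simp add: is_subfield_def)

lemma two_le_card_subfield:
  assumes "is_subfield (K :: 'a::{field,finite} set)"
  shows "2 \<le> card K"
proof -
  have "card {0::'a, 1} \<le> card K"
    using assms by (intro card_mono) (auto simp: is_subfield_def)
  thus ?thesis by simp
qed

lemma two_le_card_UNIV: "2 \<le> card (UNIV :: 'a::{field,finite} set)"
  by (rule two_le_card_subfield[OF is_subfield_UNIV])

lemma two_le_of_card_UNIV_eq_power:
  assumes "card (UNIV :: 'a::{field,finite} set) = q ^ n"
  shows "2 \<le> q"
proof (rule ccontr)
  assume "\<not> 2 \<le> q"
  hence "q = 0 \<or> q = 1" by auto
  hence "q ^ n \<le> 1" by (auto simp: power_0_left)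
  thus False using assms two_le_card_UNIV[where ?'a = 'a] by simp
qed

lemma power_card_subfield:
  fixes x :: "'a::{field,finite}"
  assumes K: "is_subfield K" and x: "x \<in> K"
  shows "x ^ card K = x"
proof (cases "x = 0")
  case True
  have "card K \<noteq> 0" using two_le_card_subfield[OF K] by linarith
  thus ?thesis using True by (simp add: power_0_left)
next
  case False
  let ?G = "K - {0}"
  have "(\<Prod>y\<in>?G. x * y) = (\<Prod>y\<in>?G. y)"
    by (rule prod.reindex_bij_witness[of _ "\<lambda>y. y / x" "\<lambda>y. x * y"])
       (use K x False in \<open>auto simp: is_subfield_def divide_inverse mult.commute\<close>)
  moreover have "(\<Prod>y\<in>?G. y) \<noteq> 0" by simp
  ultimately have "x ^ card ?G = 1" by (simp add: prod.distrib)
  moreover have "card K = Suc (card ?G)"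
    by (rule card_Suc_Diff1[symmetric]) (use K in \<open>auto simp: is_subfield_def\<close>)
  ultimately show ?thesis by simp
qed

lemma power_card_UNIV_minus_one:
  fixes x :: "'a::{field,finite}"
  assumes "x \<noteq> 0"
  shows "x ^ (card (UNIV :: 'a set) - 1) = 1"
proof -
  have "x * x ^ (card (UNIV :: 'a set) - 1) = x * 1"
    using power_card_subfield[OF is_subfield_UNIV, of x] two_le_card_UNIV[where ?'a = 'a]
    by (simp flip: power_Suc)
  thus ?thesis using assms by simp
qed

lemma prime_CHAR_finite_field: "prime CHAR('a::{field,finite})"
  using prime_CHAR_semidom finite_imp_CHAR_pos[where ?'a = 'a] by auto

lemma CHAR_eq_of_card_UNIV:
  assumes "prime p" "card (UNIV :: 'a::{field,finite} set) = p ^ e"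
  shows "CHAR('a) = p"
proof -
  have "CHAR('a) dvd p ^ e" using CHAR_dvd_CARD[where ?'a = 'a] assms(2) by simp
  thus ?thesis
    using assms(1) prime_CHAR_finite_field[where ?'a = 'a] prime_dvd_power primes_dvd_imp_eq by blast
qed

lemma is_subfield_subfield_of_order:
  "is_subfield (subfield_of_order (CHAR('a::{field,finite}) ^ k) :: 'a set)"
proof -
  define Q where "Q = CHAR('a) ^ k"
  have "0 < Q" by (simp add: Q_def prime_gt_0_nat prime_CHAR_finite_field)
  have frobenius_add: "(x + y) ^ Q = x ^ Q + y ^ Q" for x y :: 'a
    using freshmans_dream'[OF prime_CHAR_finite_field Q_def] .
  have "(- x) ^ Q + x = 0" if "x ^ Q = x" for x :: 'a
    using frobenius_add[of "- x" x] that \<open>0 < Q\<close> by (simp add: zero_power)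
  hence "(- x) ^ Q = - x" if "x ^ Q = x" for x :: 'a
    using that by (simp add: eq_neg_iff_add_eq_0)
  thus ?thesis
    using \<open>0 < Q\<close> frobenius_add
    by (simp add: Q_def[symmetric] is_subfield_def subfield_of_order_def power_mult_distrib power_inverse)
qed

lemma subfield_of_order_eq_insert_roots:
  assumes "0 < Q"
  shows "subfield_of_order Q = insert 0 {x :: 'a::{field,finite}. x ^ (Q - 1) = 1}"
proof -
  have "x ^ Q = x * x ^ (Q - 1)" for x :: 'a
    using assms by (simp flip: power_Suc)
  thus ?thesis unfolding subfield_of_order_def by auto
qed

lemma nonzero_mem_subfield_of_order_iff:
  fixes x :: "'a::{field,finite}"
  assumes "x \<noteq> 0" "0 < Q"
  shows "x \<in> subfield_of_order Q \<longleftrightarrow> x ^ (Q - 1) = 1"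
  using assms by (simp add: subfield_of_order_eq_insert_roots)

lemma degree_X_power_minus_one:
  assumes "0 < k"
  shows "degree ([:0, 1:] ^ k - 1 :: 'a::field poly) = k"
proof -
  have "degree ([:0, 1:] ^ k + - 1 :: 'a poly) = degree ([:0, 1:] ^ k :: 'a poly)"
    using assms by (intro degree_add_eq_left) (simp add: degree_linear_power)
  thus ?thesis by (simp add: degree_linear_power)
qed

text \<open>The N - 1 nonzero elements are roots of X^(N-1) - 1 = (X^d - 1) h, and neither factor has
  more roots than its degree; so X^d - 1 has exactly d roots.\<close>

lemma card_roots_of_unity:
  assumes "d dvd card (UNIV :: 'a::{field,finite} set) - 1"
  shows "card {x :: 'a. x ^ d = 1} = d"
proof -
  define N where "N = card (UNIV :: 'a set)"
  have N: "2 \<le> N" unfolding N_def by (rule two_le_card_UNIV)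
  obtain e where e: "N - 1 = d * e" using assms by (auto simp: N_def elim: dvdE)
  have d: "0 < d" using e N by (cases d) auto
  define p :: "'a poly" where "p = [:0, 1:] ^ d - 1"
  define h :: "'a poly" where "h = (\<Sum>i<e. ([:0, 1:] ^ d) ^ i)"
  have ph: "p * h = [:0, 1:] ^ (N - 1) - 1"
    unfolding p_def h_def e by (simp add: power_mult power_diff_1_eq)
  have deg_p: "degree p = d" unfolding p_def using d by (rule degree_X_power_minus_one)
  have deg_ph: "degree (p * h) = N - 1" unfolding ph using N by (intro degree_X_power_minus_one) auto
  hence "p \<noteq> 0" "h \<noteq> 0" using N by auto
  hence deg_h: "degree h = N - 1 - d" using deg_ph deg_p degree_mult_eq by fastforce
  have "UNIV - {0} \<subseteq> {x. poly p x = 0} \<union> {x. poly h x = 0}"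
  proof
    fix x :: 'a assume "x \<in> UNIV - {0}"
    hence "poly (p * h) x = 0" unfolding ph using power_card_UNIV_minus_one by (simp add: N_def)
    thus "x \<in> {x. poly p x = 0} \<union> {x. poly h x = 0}" by simp
  qed
  hence "card (UNIV - {0 :: 'a}) \<le> card ({x. poly p x = 0} \<union> {x. poly h x = 0})"
    by (intro card_mono) auto
  also have "\<dots> \<le> card {x. poly p x = 0} + card {x. poly h x = 0}" by (rule card_Un_le)
  also have "card (UNIV - {0 :: 'a}) = N - 1" by (simp add: N_def card_Diff_subset)
  moreover have "d \<le> N - 1" using assms N by (intro dvd_imp_le) (auto simp: N_def)
  ultimately have "d \<le> card {x. poly p x = 0}"
    using card_poly_roots_bound[OF \<open>h \<noteq> 0\<close>] deg_h by linarith
  moreover have "card {x. poly p x = 0} \<le> d" using card_poly_roots_bound[OF \<open>p \<noteq> 0\<close>] deg_p by simp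
  ultimately show ?thesis by (simp add: p_def)
qed

lemma power_minus_one_dvd_power_minus_one: "(a - 1) dvd (a ^ e - (1::nat))"
proof (cases "a = 0")
  case False
  have "int a - 1 dvd int a ^ e - 1" by (simp add: power_diff_1_eq)
  thus ?thesis using False by (simp add: of_nat_diff flip: int_dvd_int_iff)
qed (simp add: power_0_left)

lemma card_subfield_of_order:
  assumes card_UNIV: "card (UNIV :: 'a::{field,finite} set) = q ^ n" and "j dvd n"
  shows "card (subfield_of_order (q ^ j) :: 'a set) = q ^ j"
proof -
  obtain e where e: "n = j * e" using assms(2) by (auto elim: dvdE)
  have "2 \<le> q" by (rule two_le_of_card_UNIV_eq_power[OF card_UNIV])
  have "0 < j" using e card_UNIV two_le_card_UNIV[where ?'a = 'a] by (cases j) auto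
  hence "2 \<le> q ^ j" using \<open>2 \<le> q\<close> self_le_power[of q j] by linarith
  have "(q ^ j - 1) dvd card (UNIV :: 'a set) - 1"
    unfolding card_UNIV e power_mult by (rule power_minus_one_dvd_power_minus_one)
  hence "card {x :: 'a. x ^ (q ^ j - 1) = 1} = q ^ j - 1" by (rule card_roots_of_unity)
  moreover have "(0 :: 'a) \<notin> {x. x ^ (q ^ j - 1) = 1}"
    using \<open>2 \<le> q ^ j\<close> by (simp add: power_0_left)
  moreover have "0 < q ^ j" using \<open>2 \<le> q ^ j\<close> by linarith
  ultimately show ?thesis
    using \<open>2 \<le> q ^ j\<close> by (simp add: subfield_of_order_eq_insert_roots)
qed

section \<open>Multiplicative order\<close>

lemma mult_order_pos_power_eq_one:
  fixes x :: "'a::{field,finite}"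
  assumes "x \<noteq> 0"
  shows "0 < mult_order x" "x ^ mult_order x = 1"
proof -
  have "\<exists>k. 0 < k \<and> x ^ k = 1"
    using power_card_UNIV_minus_one[OF assms] two_le_card_UNIV[where ?'a = 'a]
    by (intro exI[of _ "card (UNIV :: 'a set) - 1"]) auto
  from LeastI_ex[OF this] show "0 < mult_order x" "x ^ mult_order x = 1"
    unfolding mult_order_def by auto
qed

lemma power_eq_one_iff_mult_order_dvd:
  fixes x :: "'a::{field,finite}"
  assumes "x \<noteq> 0"
  shows "x ^ j = 1 \<longleftrightarrow> mult_order x dvd j"
proof
  let ?r = "mult_order x"
  assume "x ^ j = 1"
  moreover have "x ^ j = (x ^ ?r) ^ (j div ?r) * x ^ (j mod ?r)"
    by (simp flip: power_mult power_add)
  ultimately have "x ^ (j mod ?r) = 1" using mult_order_pos_power_eq_one[OF assms] by simp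
  moreover have "j mod ?r < ?r" using mult_order_pos_power_eq_one[OF assms] by simp
  ultimately have "j mod ?r = 0"
    using not_less_Least[of "j mod ?r" "\<lambda>k. 0 < k \<and> x ^ k = 1"] unfolding mult_order_def by auto
  thus "?r dvd j" by auto
next
  assume "mult_order x dvd j"
  thus "x ^ j = 1" using mult_order_pos_power_eq_one[OF assms] by (auto simp: power_mult elim!: dvdE)
qed

lemma power_eq_power_iff_mod_mult_order:
  fixes x :: "'a::{field,finite}"
  assumes "x \<noteq> 0"
  shows "x ^ i = x ^ j \<longleftrightarrow> i mod mult_order x = j mod mult_order x"
proof -
  have *: "x ^ i = x ^ j \<longleftrightarrow> i mod mult_order x = j mod mult_order x" if "i \<le> j" for i j
  proof -
    have "x ^ j = x ^ i * x ^ (j - i)" using that by (simp flip: power_add)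
    hence "x ^ i = x ^ j \<longleftrightarrow> x ^ (j - i) = 1" using assms by auto
    also have "\<dots> \<longleftrightarrow> mult_order x dvd j - i" by (rule power_eq_one_iff_mult_order_dvd[OF assms])
    also have "\<dots> \<longleftrightarrow> i mod mult_order x = j mod mult_order x"
      using mod_eq_dvd_iff_nat[OF that] by metis
    finally show ?thesis .
  qed
  show ?thesis using *[of i j] *[of j i] by (cases "i \<le> j") auto
qed

lemma mult_order_eqI:
  fixes x :: "'a::{field,finite}"
  assumes "x \<noteq> 0" and "\<And>j. x ^ j = 1 \<longleftrightarrow> d dvd j"
  shows "mult_order x = d"
  using assms power_eq_one_iff_mult_order_dvd[OF assms(1)] by (metis dvd_antisym dvd_refl)

lemma mult_order_power_dvd:
  fixes x :: "'a::{field,finite}"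
  assumes "x \<noteq> 0"
  shows "mult_order (x ^ k) dvd mult_order x"
proof -
  have "(x ^ k) ^ mult_order x = (x ^ mult_order x) ^ k"
    by (simp add: mult.commute flip: power_mult)
  hence "(x ^ k) ^ mult_order x = 1" using mult_order_pos_power_eq_one(2)[OF assms] by simp
  thus ?thesis using assms by (simp add: power_eq_one_iff_mult_order_dvd)
qed

lemma mult_order_power_of_dvd:
  fixes x :: "'a::{field,finite}"
  assumes "x \<noteq> 0" "0 < t" "t dvd mult_order x"
  shows "mult_order (x ^ t) = mult_order x div t"
proof (rule mult_order_eqI)
  fix j
  have "(x ^ t) ^ j = 1 \<longleftrightarrow> t * (mult_order x div t) dvd t * j"
    using assms by (simp add: power_eq_one_iff_mult_order_dvd flip: power_mult)
  thus "(x ^ t) ^ j = 1 \<longleftrightarrow> mult_order x div t dvd j" using \<open>0 < t\<close> by simp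
qed (use assms in simp)

lemma cyclic_subgroup_eq_image:
  fixes x :: "'a::{field,finite}"
  assumes "x \<noteq> 0"
  shows "cyclic_subgroup x = (\<lambda>j. x ^ j) ` {..<mult_order x}"
proof -
  have "x ^ j = x ^ (j mod mult_order x)" for j
    using power_eq_power_iff_mod_mult_order[OF assms] by simp
  moreover have "j mod mult_order x < mult_order x" for j
    using mult_order_pos_power_eq_one(1)[OF assms] by simp
  ultimately show ?thesis unfolding cyclic_subgroup_def by blast
qed

lemma card_cyclic_subgroup:
  fixes x :: "'a::{field,finite}"
  assumes "x \<noteq> 0"
  shows "card (cyclic_subgroup x) = mult_order x"
proof -
  have "inj_on (\<lambda>j. x ^ j) {..<mult_order x}"
    by (rule inj_onI) (simp add: power_eq_power_iff_mod_mult_order[OF assms])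
  thus ?thesis by (simp add: cyclic_subgroup_eq_image[OF assms] card_image)
qed

lemma cyclic_subgroup_eq_units:
  fixes x :: "'a::{field,finite}"
  assumes "x \<noteq> 0" "mult_order x = card (UNIV :: 'a set) - 1"
  shows "cyclic_subgroup x = UNIV - {0}"
proof (rule card_subset_eq)
  show "cyclic_subgroup x \<subseteq> UNIV - {0}"
    using assms(1) by (auto simp: cyclic_subgroup_def)
  show "card (cyclic_subgroup x) = card (UNIV - {0 :: 'a})"
    using assms by (simp add: card_cyclic_subgroup card_Diff_subset)
qed auto

lemma power_mem_subfield_of_order_iff:
  fixes x :: "'a::{field,finite}"
  assumes "x \<noteq> 0" "0 < Q"
  shows "x ^ j \<in> subfield_of_order Q \<longleftrightarrow> mult_order (x ^ (Q - 1)) dvd j"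
proof -
  have "x ^ j \<in> subfield_of_order Q \<longleftrightarrow> (x ^ j) ^ (Q - 1) = 1"
    using assms by (simp add: nonzero_mem_subfield_of_order_iff)
  also have "(x ^ j) ^ (Q - 1) = (x ^ (Q - 1)) ^ j" by (simp add: mult.commute flip: power_mult)
  also have "\<dots> = 1 \<longleftrightarrow> mult_order (x ^ (Q - 1)) dvd j"
    using assms by (intro power_eq_one_iff_mult_order_dvd) simp
  finally show ?thesis .
qed

lemma card_cyclic_subgroup_Int_subfield_of_order:
  fixes \<beta> :: "'a::{field,finite}"
  assumes \<beta>: "\<beta> \<noteq> 0" and "0 < Q"
  shows "mult_order (\<beta> ^ (Q - 1)) * card (cyclic_subgroup \<beta> \<inter> (subfield_of_order Q - {0}))
           = mult_order \<beta>"
proof -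
  define t where "t = mult_order (\<beta> ^ (Q - 1))"
  have power_mem: "\<beta> ^ j \<in> subfield_of_order Q \<longleftrightarrow> t dvd j" for j
    unfolding t_def using assms by (rule power_mem_subfield_of_order_iff)
  have "0 < t" using \<beta> by (simp add: mult_order_pos_power_eq_one t_def)
  have "t dvd mult_order \<beta>" unfolding t_def using \<beta> by (rule mult_order_power_dvd)
  have "cyclic_subgroup \<beta> \<inter> (subfield_of_order Q - {0}) = cyclic_subgroup (\<beta> ^ t)"
  proof (intro equalityI subsetI)
    fix x assume "x \<in> cyclic_subgroup \<beta> \<inter> (subfield_of_order Q - {0})"
    then obtain j where "x = \<beta> ^ j" "t dvd j" using power_mem by (auto simp: cyclic_subgroup_def)
    thus "x \<in> cyclic_subgroup (\<beta> ^ t)" by (auto simp: cyclic_subgroup_def power_mult elim!: dvdE)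
  next
    fix x assume "x \<in> cyclic_subgroup (\<beta> ^ t)"
    then obtain i where "x = \<beta> ^ (t * i)" by (auto simp: cyclic_subgroup_def power_mult)
    thus "x \<in> cyclic_subgroup \<beta> \<inter> (subfield_of_order Q - {0})"
      using power_mem[of "t * i"] \<beta> by (auto simp: cyclic_subgroup_def)
  qed
  hence "card (cyclic_subgroup \<beta> \<inter> (subfield_of_order Q - {0})) = mult_order \<beta> div t"
    using \<beta> \<open>0 < t\<close> \<open>t dvd mult_order \<beta>\<close> by (simp add: card_cyclic_subgroup mult_order_power_of_dvd)
  thus ?thesis using \<open>t dvd mult_order \<beta>\<close> unfolding t_def by simp
qed

section \<open>Vector spaces over a finite subfield\<close>

definition subspace_over :: "'a::field set \<Rightarrow> 'a set \<Rightarrow> bool" where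
  "subspace_over K V \<longleftrightarrow> 0 \<in> V \<and> (\<forall>x\<in>V. \<forall>y\<in>V. x + y \<in> V) \<and> (\<forall>c\<in>K. \<forall>x\<in>V. c * x \<in> V)"

lemma is_subspace_over_iff: "is_subspace_over k U \<longleftrightarrow> subspace_over (subfield_of_order k) U"
  by (simp add: is_subspace_over_def subspace_over_def)

lemma subspace_over_UNIV: "subspace_over K UNIV"
  by (simp add: subspace_over_def)

lemma subspace_over_subfield:
  assumes "is_subfield S" "is_subfield K" "S \<subseteq> K"
  shows "subspace_over S K"
  using assms by (auto simp: is_subfield_def subspace_over_def)

lemma inj_on_add_mult_outside:
  fixes K V :: "'a::{field,finite} set"
  assumes K: "is_subfield K" and V: "subspace_over K V" and y: "y \<notin> V"
  shows "inj_on (\<lambda>(v, a). v + a * y) (V \<times> K)"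
proof (rule inj_onI, clarify, rule ccontr)
  fix v a v' a' assume in_VK: "v \<in> V" "a \<in> K" "v' \<in> V" "a' \<in> K"
    and eq: "v + a * y = v' + a' * y" and "\<not> (v = v' \<and> a = a')"
  hence "a \<noteq> a'" by auto
  hence "y = inverse (a - a') * ((a - a') * y)" by simp
  also have "(a - a') * y = v' + - 1 * v" using eq by (simp add: algebra_simps)
  finally have "y = inverse (a - a') * (v' + - 1 * v)" .
  moreover have "inverse (a - a') \<in> K" "- 1 \<in> K"
    using in_VK K unfolding is_subfield_def by (metis diff_conv_add_uminus)+
  ultimately have "y \<in> V" using in_VK V unfolding subspace_over_def by metis
  thus False using y by simp
qed

lemma subspace_over_extend:
  fixes K V :: "'a::{field,finite} set"
  assumes K: "is_subfield K" and V: "subspace_over K V" and y: "y \<notin> V"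
  defines "W \<equiv> {v + a * y | v a. v \<in> V \<and> a \<in> K}"
  shows "subspace_over K W" and "card W = card V * card K" and "insert y V \<subseteq> W"
proof -
  have K0: "0 \<in> K" and K1: "1 \<in> K" and Kadd: "\<And>a b. a \<in> K \<Longrightarrow> b \<in> K \<Longrightarrow> a + b \<in> K"
    and Kmul: "\<And>a b. a \<in> K \<Longrightarrow> b \<in> K \<Longrightarrow> a * b \<in> K"
    using K by (simp_all add: is_subfield_def)
  have V0: "0 \<in> V" and Vadd: "\<And>x z. x \<in> V \<Longrightarrow> z \<in> V \<Longrightarrow> x + z \<in> V"
    and Vmul: "\<And>c x. c \<in> K \<Longrightarrow> x \<in> V \<Longrightarrow> c * x \<in> V"
    using V by (simp_all add: subspace_over_def)
  have memW: "v + a * y \<in> W" if "v \<in> V" "a \<in> K" for v a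
    using that unfolding W_def by blast
  show "subspace_over K W"
    unfolding subspace_over_def
  proof (intro conjI ballI)
    show "0 \<in> W" using memW[OF V0 K0] by simp
  next
    fix x z assume "x \<in> W" "z \<in> W"
    then obtain v a v' a' where "x = v + a * y" "z = v' + a' * y" "v \<in> V" "a \<in> K" "v' \<in> V" "a' \<in> K"
      unfolding W_def by blast
    moreover from this have "x + z = (v + v') + (a + a') * y" by (simp add: algebra_simps)
    ultimately show "x + z \<in> W" by (metis memW Vadd Kadd)
  next
    fix c x assume "c \<in> K" "x \<in> W"
    then obtain v a where "x = v + a * y" "v \<in> V" "a \<in> K" unfolding W_def by blast
    moreover from this have "c * x = c * v + (c * a) * y" by (simp add: algebra_simps)
    ultimately show "c * x \<in> W" using \<open>c \<in> K\<close> by (metis memW Vmul Kmul)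
  qed
  have "W = (\<lambda>(v, a). v + a * y) ` (V \<times> K)" unfolding W_def by auto
  thus "card W = card V * card K"
    by (simp add: card_image[OF inj_on_add_mult_outside[OF K V y]] card_cartesian_product)
  show "insert y V \<subseteq> W"
    using memW[OF V0 K1] memW[OF _ K0] by auto
qed

lemma card_subspace_over_eq_power:
  fixes K B :: "'a::{field,finite} set"
  assumes K: "is_subfield K" and B: "subspace_over K B"
  shows "\<exists>d. card B = card K ^ d"
proof -
  have grow: "\<exists>d. card B = card K ^ d" if "subspace_over K V" "V \<subseteq> B" "card V = card K ^ j" for V j
    using that
  proof (induction "card B - card V" arbitrary: V j rule: less_induct)
    case less
    show ?case
    proof (cases "V = B")
      case False
      then obtain y where y: "y \<in> B" "y \<notin> V" using less.prems(2) by blast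
      define W where "W = {v + a * y | v a. v \<in> V \<and> a \<in> K}"
      note W = subspace_over_extend[OF K less.prems(1) y(2), folded W_def]
      have "W \<subseteq> B"
        using B y(1) less.prems(2) unfolding W_def subspace_over_def by blast
      moreover have "card V < card W" using W(3) y(2) by (intro psubset_card_mono) auto
      ultimately have "card B - card W < card B - card V" using card_mono[of B W] by simp
      thus ?thesis
        using less.hyps W(1,2) \<open>W \<subseteq> B\<close> less.prems(3) by (metis power_Suc2)
    qed (use less.prems in auto)
  qed
  have "subspace_over K {0}" "{0} \<subseteq> B"
    using B by (auto simp: subspace_over_def)
  thus ?thesis using grow[of "{0}" 0] by simp
qed

lemma subfield_eq_subfield_of_order:
  fixes S K :: "'a::{field,finite} set"
  assumes card_UNIV: "card (UNIV :: 'a set) = Q ^ n"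
    and S: "is_subfield S" "card S = Q" and K: "is_subfield K" "S \<subseteq> K"
  shows "\<exists>j>0. j dvd n \<and> K = subfield_of_order (Q ^ j)"
proof -
  obtain j where j: "card K = Q ^ j"
    using card_subspace_over_eq_power[OF S(1) subspace_over_subfield[OF S(1) K]] S(2) by auto
  obtain e where "card (UNIV :: 'a set) = card K ^ e"
    using card_subspace_over_eq_power[OF K(1) subspace_over_UNIV] by auto
  hence "Q ^ n = Q ^ (j * e)" using card_UNIV j by (simp add: power_mult)
  moreover have "1 < Q" using two_le_of_card_UNIV_eq_power[OF card_UNIV] by simp
  ultimately have "j dvd n" by simp
  have "0 < j" using two_le_card_subfield[OF K(1)] j by (cases j) auto
  have "K \<subseteq> subfield_of_order (card K)"
    using power_card_subfield[OF K(1)] by (auto simp: subfield_of_order_def)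
  hence "K = subfield_of_order (Q ^ j)"
    using card_subfield_of_order[OF card_UNIV \<open>j dvd n\<close>] j by (intro card_subset_eq) auto
  thus ?thesis using \<open>0 < j\<close> \<open>j dvd n\<close> by blast
qed

section \<open>The stabilizer of a flag\<close>

definition flag_multipliers :: "'a::field set list \<Rightarrow> 'a set" where
  "flag_multipliers F = {c. \<forall>U\<in>set F. \<forall>u\<in>U. c * u \<in> U}"

lemma image_mult_right_eq_self:
  fixes U :: "'a::{field,finite} set"
  assumes "c \<noteq> 0" "\<forall>u\<in>U. c * u \<in> U"
  shows "(\<lambda>u. u * c) ` U = U"
proof (rule card_subset_eq)
  show "(\<lambda>u. u * c) ` U \<subseteq> U" using assms by (auto simp: mult.commute)
  show "card ((\<lambda>u. u * c) ` U) = card U" using assms(1) by (intro card_image inj_onI) simp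
qed simp

lemma flag_mult_eq_self_iff:
  fixes F :: "'a::{field,finite} set list"
  assumes "\<gamma> \<noteq> 0"
  shows "flag_mult F \<gamma> = F \<longleftrightarrow> \<gamma> \<in> flag_multipliers F"
proof -
  have "flag_mult F \<gamma> = F \<longleftrightarrow> (\<forall>U\<in>set F. (\<lambda>u. u * \<gamma>) ` U = U)"
    unfolding flag_mult_def by (induction F) auto
  also have "\<dots> \<longleftrightarrow> \<gamma> \<in> flag_multipliers F"
  proof
    assume stable: "\<forall>U\<in>set F. (\<lambda>u. u * \<gamma>) ` U = U"
    show "\<gamma> \<in> flag_multipliers F" unfolding flag_multipliers_def
    proof (intro CollectI ballI)
      fix U u assume "U \<in> set F" "u \<in> U"
      hence "u * \<gamma> \<in> (\<lambda>u. u * \<gamma>) ` U" by blast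
      thus "\<gamma> * u \<in> U" using stable \<open>U \<in> set F\<close> by (simp add: mult.commute)
    qed
  next
    assume \<gamma>: "\<gamma> \<in> flag_multipliers F"
    show "\<forall>U\<in>set F. (\<lambda>u. u * \<gamma>) ` U = U"
    proof
      fix U assume "U \<in> set F"
      with \<gamma> show "(\<lambda>u. u * \<gamma>) ` U = U"
        by (intro image_mult_right_eq_self[OF assms]) (simp add: flag_multipliers_def)
    qed
  qed
  finally show ?thesis .
qed

lemma is_subfield_flag_multipliers:
  fixes F :: "'a::{field,finite} set list"
  assumes K: "is_subfield K" and U: "\<forall>U\<in>set F. subspace_over K U"
  shows "is_subfield (flag_multipliers F)"
proof -
  let ?M = "flag_multipliers F"
  have U0: "\<And>U. U \<in> set F \<Longrightarrow> 0 \<in> U"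
    and Uadd: "\<And>U x y. U \<in> set F \<Longrightarrow> x \<in> U \<Longrightarrow> y \<in> U \<Longrightarrow> x + y \<in> U"
    and Umul: "\<And>U c x. U \<in> set F \<Longrightarrow> c \<in> K \<Longrightarrow> x \<in> U \<Longrightarrow> c * x \<in> U"
    using U by (simp_all add: subspace_over_def)
  have M01: "0 \<in> ?M" "1 \<in> ?M" using U0 by (simp_all add: flag_multipliers_def)
  moreover have "a + b \<in> ?M" "a * b \<in> ?M" if "a \<in> ?M" "b \<in> ?M" for a b
    using that Uadd by (simp_all add: flag_multipliers_def distrib_right mult.assoc)
  moreover have "- a \<in> ?M" if a: "a \<in> ?M" for a
    unfolding flag_multipliers_def
  proof (intro CollectI ballI)
    fix U u assume "U \<in> set F" "u \<in> U"
    hence au: "a * u \<in> U" using a by (simp add: flag_multipliers_def)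
    have "- 1 \<in> K" using K by (simp add: is_subfield_def)
    from Umul[OF \<open>U \<in> set F\<close> this au] show "- a * u \<in> U" by simp
  qed
  moreover have "inverse c \<in> ?M" if c: "c \<in> ?M" for c
  proof (cases "c = 0")
    case False
    show ?thesis unfolding flag_multipliers_def
    proof (intro CollectI ballI)
      fix U u assume "U \<in> set F" "u \<in> U"
      have "(\<lambda>u. u * c) ` U = U"
        using c \<open>U \<in> set F\<close> by (intro image_mult_right_eq_self[OF False]) (simp add: flag_multipliers_def)
      with \<open>u \<in> U\<close> obtain w where "w \<in> U" "u = w * c" by blast
      thus "inverse c * u \<in> U" using False by (simp add: field_simps)
    qed
  qed (simp add: M01)
  ultimately show ?thesis by (simp add: is_subfield_def)
qed

lemma flag_multipliers_eq_best_friend: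
  fixes F :: "'a::{field,finite} set list"
  assumes q: "q = CHAR('a) ^ k" and card_UNIV: "card (UNIV :: 'a set) = q ^ n"
    and best: "is_best_friend q n F m"
  shows "flag_multipliers F = subfield_of_order (q ^ m)"
proof -
  let ?S = "subfield_of_order (q ^ m) :: 'a set" and ?M = "flag_multipliers F"
  have "0 < m" "m dvd n" and U: "\<forall>U\<in>set F. subspace_over ?S U"
    and maximal: "\<And>m'. is_friend q n F m' \<Longrightarrow> m' \<le> m"
    using best by (auto simp: is_best_friend_def is_friend_def is_subspace_over_iff)
  have S: "is_subfield ?S"
    using is_subfield_subfield_of_order[of "k * m"] by (simp add: q power_mult)
  have "?S \<subseteq> ?M" and UM: "\<forall>U\<in>set F. subspace_over ?M U"
    using U by (auto simp: flag_multipliers_def subspace_over_def)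
  moreover have "card (UNIV :: 'a set) = (q ^ m) ^ (n div m)"
    using card_UNIV \<open>m dvd n\<close> by (simp flip: power_mult)
  ultimately obtain j where j: "0 < j" "j dvd n div m" "?M = subfield_of_order ((q ^ m) ^ j)"
    using subfield_eq_subfield_of_order[OF _ S card_subfield_of_order[OF card_UNIV \<open>m dvd n\<close>]
        is_subfield_flag_multipliers[OF S U]] by blast
  have "m * j dvd m * (n div m)" using j(2) by (rule mult_dvd_mono[OF dvd_refl])
  hence "is_friend q n F (m * j)"
    unfolding is_friend_def is_subspace_over_iff
    using \<open>0 < m\<close> \<open>m dvd n\<close> j(1,3) UM by (simp add: power_mult)
  hence "j = 1" using maximal[of "m * j"] \<open>0 < m\<close> j(1) by simp
  thus ?thesis using j(3) by simp
qed

lemma flag_mult_eq_self_iff_best_friend: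
  fixes F :: "'a::{field,finite} set list"
  assumes "prime p" "q = p ^ k" and card_UNIV: "card (UNIV :: 'a set) = q ^ n"
    and best: "is_best_friend q n F m" and "\<gamma> \<noteq> 0"
  shows "flag_mult F \<gamma> = F \<longleftrightarrow> \<gamma> \<in> subfield_of_order (q ^ m)"
proof -
  have "CHAR('a) = p"
    using CHAR_eq_of_card_UNIV[OF \<open>prime p\<close>] card_UNIV \<open>q = p ^ k\<close> by (simp flip: power_mult)
  hence "q = CHAR('a) ^ k" using \<open>q = p ^ k\<close> by simp
  hence "flag_multipliers F = subfield_of_order (q ^ m)"
    using card_UNIV best by (rule flag_multipliers_eq_best_friend)
  thus ?thesis using flag_mult_eq_self_iff[OF \<open>\<gamma> \<noteq> 0\<close>, of F] by simp
qed

section \<open>Orbits\<close>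

lemma card_image_lessThan_mod:
  assumes "0 < r" "t dvd r" and f: "\<And>i j. f i = f j \<longleftrightarrow> i mod t = j mod t"
  shows "card (f ` {..<r}) = t"
proof -
  have t: "0 < t" "t \<le> r" using assms(1,2) by (auto intro: dvd_imp_le)
  have "f ` {..<r} = f ` {..<t}"
  proof
    show "f ` {..<r} \<subseteq> f ` {..<t}"
    proof (rule image_subsetI)
      fix i
      have "f i = f (i mod t)" using f[of i "i mod t"] by simp
      moreover have "i mod t < t" using t(1) by simp
      ultimately show "f i \<in> f ` {..<t}" by blast
    qed
  qed (use t in auto)
  moreover have "inj_on f {..<t}" by (rule inj_onI) (simp add: f)
  ultimately show ?thesis by (simp add: card_image)
qed

lemma flag_mult_mult: "flag_mult (flag_mult F a) b = flag_mult F (a * b)"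
  unfolding flag_mult_def by (simp add: image_image mult.assoc)

lemma flag_mult_1: "flag_mult F 1 = F"
  by (simp add: flag_mult_def)

lemma flag_mult_eq_iff:
  fixes a b :: "'a::{field,finite}"
  assumes "b \<noteq> 0"
  shows "flag_mult F a = flag_mult F b \<longleftrightarrow> flag_mult F (a / b) = F"
proof
  assume "flag_mult F a = flag_mult F b"
  hence "flag_mult (flag_mult F a) (inverse b) = flag_mult (flag_mult F b) (inverse b)" by simp
  thus "flag_mult F (a / b) = F" using assms by (simp add: flag_mult_mult flag_mult_1 divide_inverse)
next
  assume "flag_mult F (a / b) = F"
  hence "flag_mult (flag_mult F (a / b)) b = flag_mult F b" by simp
  thus "flag_mult F a = flag_mult F b" using assms by (simp add: flag_mult_mult)
qed

lemma orbit_beta_eq_image: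
  fixes \<beta> :: "'a::{field,finite}"
  assumes "\<beta> \<noteq> 0"
  shows "orbit_beta \<beta> F = flag_mult F ` cyclic_subgroup \<beta>"
  unfolding orbit_beta_def cyclic_subgroup_eq_image[OF assms] by auto

lemma orbit_full_eq_orbit_beta:
  fixes \<beta> :: "'a::{field,finite}"
  assumes "\<beta> \<noteq> 0" "cyclic_subgroup \<beta> = UNIV - {0}"
  shows "orbit_full F = orbit_beta \<beta> F"
  unfolding orbit_beta_eq_image[OF assms(1)] assms(2) orbit_full_def by auto

lemma card_orbit_beta:
  fixes \<beta> :: "'a::{field,finite}"
  assumes \<beta>: "\<beta> \<noteq> 0" and "0 < Q"
    and stab: "\<And>\<gamma>. \<gamma> \<noteq> 0 \<Longrightarrow> flag_mult F \<gamma> = F \<longleftrightarrow> \<gamma> \<in> subfield_of_order Q"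
  shows "card (orbit_beta \<beta> F) = mult_order (\<beta> ^ (Q - 1))"
proof -
  define t where "t = mult_order (\<beta> ^ (Q - 1))"
  have same_flag: "flag_mult F (\<beta> ^ i) = flag_mult F (\<beta> ^ j) \<longleftrightarrow> i mod t = j mod t" for i j
  proof -
    have "flag_mult F (\<beta> ^ i) = flag_mult F (\<beta> ^ j) \<longleftrightarrow> (\<beta> ^ i / \<beta> ^ j) ^ (Q - 1) = 1"
      using \<beta> \<open>0 < Q\<close> by (simp add: flag_mult_eq_iff stab nonzero_mem_subfield_of_order_iff)
    also have "(\<beta> ^ i / \<beta> ^ j) ^ (Q - 1) = (\<beta> ^ (Q - 1)) ^ i / (\<beta> ^ (Q - 1)) ^ j"
      by (simp add: power_divide mult.commute flip: power_mult)
    also have "\<dots> = 1 \<longleftrightarrow> (\<beta> ^ (Q - 1)) ^ i = (\<beta> ^ (Q - 1)) ^ j"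
      using \<beta> by simp
    finally show ?thesis using \<beta> by (simp add: power_eq_power_iff_mod_mult_order t_def)
  qed
  have "0 < mult_order \<beta>" using \<beta> by (simp add: mult_order_pos_power_eq_one)
  moreover have "t dvd mult_order \<beta>" unfolding t_def using \<beta> by (rule mult_order_power_dvd)
  moreover have "orbit_beta \<beta> F = (\<lambda>j. flag_mult F (\<beta> ^ j)) ` {..<mult_order \<beta>}"
    unfolding orbit_beta_def by auto
  ultimately show ?thesis
    using card_image_lessThan_mod[of _ t, OF _ _ same_flag] by (simp add: t_def)
qed

theorem proposition4p1:
  fixes F :: "'a::{field,finite} set list" and \<beta> :: 'a and q n m :: nat
  assumes "\<exists>p k. prime p \<and> 0 < k \<and> q = p ^ k"
    and "card (UNIV :: 'a set) = q ^ n"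
    and "is_flag q F"
    and "\<beta> \<noteq> 0"
    and "is_best_friend q n F m"
  shows "real (card (orbit_beta \<beta> F)) =
           real (mult_order \<beta>) / real (card (cyclic_subgroup \<beta> \<inter> (subfield_of_order (q ^ m) - {0}))) \<and>
         (mult_order \<beta> = q ^ n - 1 \<longrightarrow>
           real (card (orbit_full F)) = real (q ^ n - 1) / real (q ^ m - 1))"
proof -
  obtain p k where p: "prime p" "q = p ^ k" using assms(1) by blast
  let ?S = "subfield_of_order (q ^ m) :: 'a set"
  have "0 < q ^ m" using two_le_of_card_UNIV_eq_power[OF assms(2)] by simp
  have "card (orbit_beta \<beta> F) * card (cyclic_subgroup \<beta> \<inter> (?S - {0})) = mult_order \<beta>"
    using card_orbit_beta[OF assms(4) \<open>0 < q ^ m\<close> flag_mult_eq_self_iff_best_friend[OF p assms(2,5)]]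
      card_cyclic_subgroup_Int_subfield_of_order[OF assms(4) \<open>0 < q ^ m\<close>] by simp
  moreover have "1 \<in> cyclic_subgroup \<beta> \<inter> (?S - {0})"
    by (auto simp: cyclic_subgroup_def subfield_of_order_def intro: exI[of _ 0])
  hence "card (cyclic_subgroup \<beta> \<inter> (?S - {0})) \<noteq> 0" by auto
  ultimately have orbit: "real (card (orbit_beta \<beta> F)) =
      real (mult_order \<beta>) / real (card (cyclic_subgroup \<beta> \<inter> (?S - {0})))"
    by (simp add: field_simps flip: of_nat_mult)
  moreover have "real (card (orbit_full F)) = real (q ^ n - 1) / real (q ^ m - 1)"
    if primitive: "mult_order \<beta> = q ^ n - 1"
  proof -
    have units: "cyclic_subgroup \<beta> = UNIV - {0}"
      by (rule cyclic_subgroup_eq_units[OF assms(4)]) (simp add: assms(2) primitive)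
    have "card (?S - {0}) = q ^ m - 1"
      using card_subfield_of_order[OF assms(2)] \<open>0 < q ^ m\<close> assms(5)
      by (simp add: is_best_friend_def is_friend_def subfield_of_order_def power_0_left)
    moreover have "cyclic_subgroup \<beta> \<inter> (?S - {0}) = ?S - {0}" using units by blast
    ultimately show ?thesis using orbit primitive orbit_full_eq_orbit_beta[OF assms(4) units] by simp
  qed
  ultimately show ?thesis by blast
qed

end
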